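(* Let $T$ be a reducing triangulation. Any walk in $T$ whose turn sequence has the form $2\,3^*\,2$ contains a $2_r$-turn. Any walk in $T$ whose turn sequence has the form $2\,3^*\,4$ or $4\,3^*\,2$ contains a $2_r$-turn or a $4_r$-turn.
   Context: A triangulation is an embedded graph whose faces are all open disks bounded by three edge-sides. A reducing triangulation $T$ of an oriented surface without boundary is a triangulation in which every vertex has degree at least $8$ and each triangle is colored red or blue so that adjacent triangles have different colors. It may be infinite, for instance when lifted to a covering space together with its colors. Suppose a walk traverses a directed edge $e$ into a vertex $v$ and then leaves $v$ along a directed edge $e'$. This occurrence of $v$ makes a $k$-turn ($k\ge 0$) if exactly $k$ triangles around $v$ lie to the left of the length-two walk $e\,e'$, between $e$ and $e'$ in the cyclic order around $v$. It makes a $-k$-turn ($k\ge 1$) if exactly $k$ triangles lie to its right. A turn is named by an integer in $\{-3,\dots,3\}$ when possible, which is unambiguous since degrees are at least $8$; otherwise it is named by the positive integer. A $k_b$-turn (resp. $k_r$-turn) is a $k$-turn in which the triangle to the left of $e$ is blue (resp. red). The turn sequence of a walk is the sequence of turns made at its interior vertices. Here $3^*$ denotes any number $\ge 0$ of consecutive $3$'s. *)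

theory Defs
  imports Main
begin

text \<open>Combinatorial model of an (possibly infinite) triangulation of an oriented
surface without boundary: a set of darts (directed edges) of type 'd,
 sigma: next dart counterclockwise around the tail vertex (a bijection),
 alpha: reversal of a dart (fixed-point-free involution).
The face to the left of a dart d is the corner (d, sigma d) at its tail; the next
dart along the boundary of that face is  face_next = inv sigma (alpha d).
Colours are attached to darts: col d is the colour of the triangle to the left of d.\<close>

datatype colour = Red | Blue

definition vorbit :: "('d \<Rightarrow> 'd) \<Rightarrow> 'd \<Rightarrow> 'd set" where
  "vorbit \<sigma> d = range (\<lambda>n. (\<sigma> ^^ n) d)"

definition degree :: "('d \<Rightarrow> 'd) \<Rightarrow> 'd \<Rightarrow> nat" where
  "degree \<sigma> d = card (vorbit \<sigma> d)"

definition face_next :: "('d \<Rightarrow> 'd) \<Rightarrow> ('d \<Rightarrow> 'd) \<Rightarrow> 'd \<Rightarrow> 'd" where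
  "face_next \<sigma> \<alpha> d = inv \<sigma> (\<alpha> d)"

definition reducing_triangulation ::
  "('d \<Rightarrow> 'd) \<Rightarrow> ('d \<Rightarrow> 'd) \<Rightarrow> ('d \<Rightarrow> colour) \<Rightarrow> bool" where
  "reducing_triangulation \<sigma> \<alpha> col \<longleftrightarrow>
     bij \<sigma> \<and>
     (\<forall>d. \<alpha> (\<alpha> d) = d \<and> \<alpha> d \<noteq> d) \<and>
     (\<forall>d. face_next \<sigma> \<alpha> (face_next \<sigma> \<alpha> (face_next \<sigma> \<alpha> d)) = d
          \<and> face_next \<sigma> \<alpha> d \<noteq> d) \<and>
     (\<forall>d. finite (vorbit \<sigma> d) \<and> degree \<sigma> d \<ge> 8) \<and>
     (\<forall>d. col (face_next \<sigma> \<alpha> d) = col d \<and> col (\<alpha> d) \<noteq> col d)"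

text \<open>A walk is a nonempty list of darts, the head of each being the tail of the next.\<close>
definition is_walk :: "('d \<Rightarrow> 'd) \<Rightarrow> ('d \<Rightarrow> 'd) \<Rightarrow> 'd list \<Rightarrow> bool" where
  "is_walk \<sigma> \<alpha> ds \<longleftrightarrow> ds \<noteq> [] \<and>
     (\<forall>i. Suc i < length ds \<longrightarrow> \<alpha> (ds ! i) \<in> vorbit \<sigma> (ds ! Suc i))"

text \<open>Number of triangles to the left of the length-two walk e e' (e enters v, e' leaves v).\<close>
definition left_count :: "('d \<Rightarrow> 'd) \<Rightarrow> ('d \<Rightarrow> 'd) \<Rightarrow> 'd \<Rightarrow> 'd \<Rightarrow> nat" where
  "left_count \<sigma> \<alpha> e e' = (LEAST k. (\<sigma> ^^ k) e' = \<alpha> e)"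

definition turn_name :: "('d \<Rightarrow> 'd) \<Rightarrow> ('d \<Rightarrow> 'd) \<Rightarrow> 'd \<Rightarrow> 'd \<Rightarrow> int" where
  "turn_name \<sigma> \<alpha> e e' =
     (let k = left_count \<sigma> \<alpha> e e'; n = degree \<sigma> e' in
      if k \<le> 3 then int k else if n - k \<le> 3 then - int (n - k) else int k)"

definition turn_seq :: "('d \<Rightarrow> 'd) \<Rightarrow> ('d \<Rightarrow> 'd) \<Rightarrow> 'd list \<Rightarrow> int list" where
  "turn_seq \<sigma> \<alpha> ds = map (\<lambda>i. turn_name \<sigma> \<alpha> (ds ! i) (ds ! Suc i)) [0..<length ds - 1]"

text \<open>The walk contains a j_r-turn: a j-turn whose incoming dart has a red triangle on its left.\<close>
definition has_red_turn ::
  "('d \<Rightarrow> 'd) \<Rightarrow> ('d \<Rightarrow> 'd) \<Rightarrow> ('d \<Rightarrow> colour) \<Rightarrow> 'd list \<Rightarrow> int \<Rightarrow> bool" where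
  "has_red_turn \<sigma> \<alpha> col ds j \<longleftrightarrow>
     (\<exists>i. Suc i < length ds \<and> turn_name \<sigma> \<alpha> (ds ! i) (ds ! Suc i) = j \<and> col (ds ! i) = Red)"

end

theory Submission
  imports Defs
begin

(* Around every vertex the triangles alternate in colour, so for a turn with left count
  k the outgoing dart has the colour of the incoming one iff k is odd. Along a turn sequence
  a 3* b with a even, the 3-turns preserve the colour and the first turn flips it;
  hence the darts entering the first and the last turn have different colours, and the one
  that is red yields a red a-turn or a red b-turn. *)

lemma colour_sigma_neq:
  assumes "reducing_triangulation \<sigma> \<alpha> col"
  shows "col (\<sigma> d) \<noteq> col d"
proof -
  have bij: "bij \<sigma>" and invol: "\<And>d. \<alpha> (\<alpha> d) = d"
    and colour: "\<And>d. col (face_next \<sigma> \<alpha> d) = col d \<and> col (\<alpha> d) \<noteq> col d"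
    using assms unfolding reducing_triangulation_def by auto
  have "face_next \<sigma> \<alpha> (\<alpha> (\<sigma> d)) = d"
    unfolding face_next_def invol using bij by (simp add: bij_is_inj)
  then have "col d = col (\<alpha> (\<sigma> d))" using colour by metis
  then show ?thesis using colour by metis
qed

lemma colour_funpow_sigma_eq_iff:
  assumes "reducing_triangulation \<sigma> \<alpha> col"
  shows "col ((\<sigma> ^^ k) d) = col d \<longleftrightarrow> even k"
proof (induction k)
  case 0
  then show ?case by simp
next
  case (Suc k)
  have "col (\<sigma> ((\<sigma> ^^ k) d)) \<noteq> col ((\<sigma> ^^ k) d)"
    using colour_sigma_neq[OF assms] .
  with Suc.IH show ?case
    by (cases "col (\<sigma> ((\<sigma> ^^ k) d))"; cases "col ((\<sigma> ^^ k) d)"; cases "col d") auto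
qed

lemma funpow_left_count:
  fixes \<sigma> \<alpha> :: "'d \<Rightarrow> 'd"
  assumes "\<alpha> e \<in> vorbit \<sigma> e'"
  shows "(\<sigma> ^^ left_count \<sigma> \<alpha> e e') e' = \<alpha> e"
proof -
  from assms obtain n where "(\<sigma> ^^ n) e' = \<alpha> e"
    unfolding vorbit_def by auto
  then show ?thesis
    unfolding left_count_def by (rule LeastI)
qed

lemma colour_turn_eq_iff_odd_left_count:
  assumes "reducing_triangulation \<sigma> \<alpha> col" and "\<alpha> e \<in> vorbit \<sigma> e'"
  shows "col e' = col e \<longleftrightarrow> odd (left_count \<sigma> \<alpha> e e')"
proof -
  have "col (\<alpha> e) \<noteq> col e"
    using assms(1) unfolding reducing_triangulation_def by auto
  moreover have "col (\<alpha> e) = col e' \<longleftrightarrow> even (left_count \<sigma> \<alpha> e e')"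
    using colour_funpow_sigma_eq_iff[OF assms(1)]
      funpow_left_count[where \<alpha>=\<alpha> and e=e, OF assms(2)] by metis
  ultimately show ?thesis
    by (cases "col e"; cases "col e'"; cases "col (\<alpha> e)") auto
qed

lemma left_count_eq_turn_name:
  assumes "turn_name \<sigma> \<alpha> e e' = j" and "j \<ge> 2"
  shows "left_count \<sigma> \<alpha> e e' = nat j"
  using assms unfolding turn_name_def Let_def by (auto split: if_splits)

lemma length_turn_seq: "length (turn_seq \<sigma> \<alpha> ds) = length ds - 1"
  unfolding turn_seq_def by simp

lemma nth_turn_seq:
  assumes "Suc i < length ds"
  shows "turn_seq \<sigma> \<alpha> ds ! i = turn_name \<sigma> \<alpha> (ds ! i) (ds ! Suc i)"
proof -
  have "i < length ds - 1" using assms by simp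
  then show ?thesis unfolding turn_seq_def by (simp del: upt_Suc)
qed

lemma walk_colour_step:
  assumes "reducing_triangulation \<sigma> \<alpha> col" and "is_walk \<sigma> \<alpha> ds"
    and "Suc i < length ds" and "turn_seq \<sigma> \<alpha> ds ! i = j" and "j \<ge> 2"
  shows "col (ds ! Suc i) = col (ds ! i) \<longleftrightarrow> odd (nat j)"
proof -
  have "\<alpha> (ds ! i) \<in> vorbit \<sigma> (ds ! Suc i)"
    using assms(2,3) unfolding is_walk_def by blast
  moreover have "left_count \<sigma> \<alpha> (ds ! i) (ds ! Suc i) = nat j"
    using assms(3-5) by (intro left_count_eq_turn_name) (simp_all add: nth_turn_seq)
  ultimately show ?thesis
    using colour_turn_eq_iff_odd_left_count[OF assms(1)] by metis
qed

lemma has_red_turn_first_or_last: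
  fixes a b :: int
  assumes rt: "reducing_triangulation \<sigma> \<alpha> col" and walk: "is_walk \<sigma> \<alpha> ds"
    and turns: "turn_seq \<sigma> \<alpha> ds = [a] @ replicate m 3 @ [b]"
    and "even a" and "a \<ge> 2"
  shows "has_red_turn \<sigma> \<alpha> col ds a \<or> has_red_turn \<sigma> \<alpha> col ds b"
proof -
  have len: "length ds = m + 3"
    using arg_cong[OF turns, of length] walk unfolding length_turn_seq is_walk_def by simp
  have first_flips: "col (ds ! 1) \<noteq> col (ds ! 0)"
    using walk_colour_step[OF rt walk, of 0 a] turns len \<open>even a\<close> \<open>a \<ge> 2\<close>
    by (simp add: even_nat_iff)
  have threes_keep: "col (ds ! Suc i) = col (ds ! 1)" if "i \<le> m" for i
    using that
  proof (induction i)
    case 0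
    then show ?case by simp
  next
    case (Suc i)
    have "turn_seq \<sigma> \<alpha> ds ! Suc i = 3"
      using Suc.prems unfolding turns by (simp add: nth_append)
    then have "col (ds ! Suc (Suc i)) = col (ds ! Suc i)"
      using walk_colour_step[OF rt walk, of "Suc i" 3] Suc.prems len by simp
    with Suc show ?case by simp
  qed
  have first: "turn_name \<sigma> \<alpha> (ds ! 0) (ds ! Suc 0) = a"
    and last: "turn_name \<sigma> \<alpha> (ds ! Suc m) (ds ! Suc (Suc m)) = b"
    using nth_turn_seq[of 0 ds \<sigma> \<alpha>] nth_turn_seq[of "Suc m" ds \<sigma> \<alpha>] len
    unfolding turns by (simp_all add: nth_append)
  have "col (ds ! 0) = Red \<or> col (ds ! Suc m) = Red"
    using first_flips threes_keep[of m] by (cases "col (ds ! 0)"; cases "col (ds ! Suc m)") auto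
  then show ?thesis
    unfolding has_red_turn_def using first last len by force
qed

theorem lemma3p3:
  fixes \<sigma> \<alpha> :: "'d \<Rightarrow> 'd" and col :: "'d \<Rightarrow> colour" and ds :: "'d list" and m :: nat
  assumes "reducing_triangulation \<sigma> \<alpha> col"
    and "is_walk \<sigma> \<alpha> ds"
  shows "(turn_seq \<sigma> \<alpha> ds = [2] @ replicate m 3 @ [2] \<longrightarrow> has_red_turn \<sigma> \<alpha> col ds 2)
       \<and> ((turn_seq \<sigma> \<alpha> ds = [2] @ replicate m 3 @ [4] \<or> turn_seq \<sigma> \<alpha> ds = [4] @ replicate m 3 @ [2])
          \<longrightarrow> has_red_turn \<sigma> \<alpha> col ds 2 \<or> has_red_turn \<sigma> \<alpha> col ds 4)"
  using has_red_turn_first_or_last[OF assms, of 2 m 2]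
    has_red_turn_first_or_last[OF assms, of 2 m 4]
    has_red_turn_first_or_last[OF assms, of 4 m 2]
  by auto

end
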